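(* Let $A\in\mathbb{C}^{m\times n}$ have rank $r$, $B\in\mathbb{C}^{m\times n}$ have rank $s$, and $E=B-A$. Then $$\|B^{\dagger}-A^{\dagger}\|_{F}^{2}\geq\max\big\{\alpha'_{1}+\|B^{\dagger}EA^{\dagger}\|_{F}^{2},\ \alpha'_{2}+\|A^{\dagger}EB^{\dagger}\|_{F}^{2}\big\},$$ where $$\alpha'_{1}:=\frac{\|A^{\dagger}E\|_{F}^{2}-\|A^{\dagger}EB^{\dagger}B\|_{F}^{2}}{\|A\|_{2}^{2}}+\frac{\|EB^{\dagger}\|_{F}^{2}-\|AA^{\dagger}EB^{\dagger}\|_{F}^{2}}{\|B\|_{2}^{2}},$$ $$\alpha'_{2}:=\frac{\|EA^{\dagger}\|_{F}^{2}-\|BB^{\dagger}EA^{\dagger}\|_{F}^{2}}{\|A\|_{2}^{2}}+\frac{\|B^{\dagger}E\|_{F}^{2}-\|B^{\dagger}EA^{\dagger}A\|_{F}^{2}}{\|B\|_{2}^{2}}.$$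
   Context: $M^{\dagger}$ denotes the Moore–Penrose inverse of $M$, $\|\cdot\|_{2}$ the spectral norm and $\|\cdot\|_{F}$ the Frobenius norm. *)

theory Defs
  imports "HOL-Analysis.Analysis"
begin

text \<open>Complex m x n matrices are modelled as complex ^'n ^'m (rows indexed by 'm).\<close>

definition cmat_adj :: "complex ^'n ^'m \<Rightarrow> complex ^'m ^'n" where
  "cmat_adj A = (\<chi> i j. cnj (A $ j $ i))"

definition penrose :: "complex ^'n ^'m \<Rightarrow> complex ^'m ^'n \<Rightarrow> bool" where
  "penrose A X \<longleftrightarrow> A ** X ** A = A \<and> X ** A ** X = X \<and>
     cmat_adj (A ** X) = A ** X \<and> cmat_adj (X ** A) = X ** A"

definition mp_inv :: "complex ^'n ^'m \<Rightarrow> complex ^'m ^'n" where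
  "mp_inv A = (THE X. penrose A X)"

definition spec_norm :: "complex ^'n ^'m \<Rightarrow> real" where
  "spec_norm A = onorm (\<lambda>x. A *v x)"

definition frob_norm :: "complex ^'n ^'m \<Rightarrow> real" where
  "frob_norm A = sqrt (\<Sum>i\<in>UNIV. \<Sum>j\<in>UNIV. (cmod (A $ i $ j))\<^sup>2)"

end

theory Submission
  imports Defs
begin

(* With the orthogonal projectors Q = A A\<dagger> and P = B\<dagger> B, the difference D = B\<dagger> - A\<dagger> splits
   into four orthogonal blocks: P D Q = -B\<dagger> E A\<dagger>, P D (I - Q) = B\<dagger> (I - Q),
   (I - P) D Q = -(I - P) A\<dagger> and (I - P) D (I - Q) = 0, so Pythagoras gives
   |D|\<^sup>2 = |B\<dagger> E A\<dagger>|\<^sup>2 + |B\<dagger> (I - Q)|\<^sup>2 + |(I - P) A\<dagger>|\<^sup>2 in the Frobenius norm.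
   The last two terms dominate the two quotients of \<alpha>1: for instance
   |A\<dagger> E|\<^sup>2 - |A\<dagger> E P|\<^sup>2 = |A\<dagger> E (I - P)|\<^sup>2, and A\<dagger> E (I - P) = -A\<^sup>* ((I - P) A\<dagger>)\<^sup>* because
   B (I - P) = 0 and A\<dagger> A is Hermitian, whence the bound |A|\<^sub>2 |(I - P) A\<dagger>|.
   Exchanging A and B gives the bound with \<alpha>2.
   Since mp_inv is defined by a description, the Penrose equations have to be solved first:
   A\<dagger> = S A\<^sup>* where S is a real polynomial in T = A\<^sup>* A with S T\<^sup>2 = T, which exists because
   T lies in the span of its higher powers. *)

lemma frob_norm_eq_norm: "frob_norm A = norm A"
  unfolding frob_norm_def norm_vec_def L2_set_def
  by (simp add: real_sqrt_pow2 sum_nonneg)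

lemma norm_matrix_sq: "(norm (Z::complex^'n^'m))\<^sup>2 = (\<Sum>i\<in>UNIV. \<Sum>j\<in>UNIV. (cmod (Z $ i $ j))\<^sup>2)"
  by (simp add: frob_norm_eq_norm[symmetric] frob_norm_def sum_nonneg)

lemma norm_vector_sq: "(norm (z::complex^'n))\<^sup>2 = (\<Sum>i\<in>UNIV. (cmod (z $ i))\<^sup>2)"
  by (simp add: norm_vec_def L2_set_def sum_nonneg)

lemma norm_matrix_sq_columns: "(norm (Z::complex^'n^'m))\<^sup>2 = (\<Sum>j\<in>UNIV. (norm (column j Z))\<^sup>2)"
  by (simp add: norm_matrix_sq norm_vector_sq column_def) (rule sum.swap)

lemma column_matrix_mult: "column j (M ** Z) = M *v column j (Z::complex^'p^'n)"
  by (simp add: vec_eq_iff column_def matrix_matrix_mult_def matrix_vector_mult_def)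

lemma matrix_diff_rdistrib: "(A - B) ** C = A ** C - B ** (C :: 'a::ring_1^_^_)"
  by (simp add: vec_eq_iff matrix_matrix_mult_def sum_subtractf algebra_simps)

lemma matrix_diff_ldistrib: "C ** (A - B) = C ** A - C ** (B :: 'a::ring_1^_^_)"
  by (simp add: vec_eq_iff matrix_matrix_mult_def sum_subtractf algebra_simps)

lemma matrix_add_rdistrib: "(A + B) ** C = A ** C + B ** (C :: 'a::ring_1^_^_)"
  by (simp add: vec_eq_iff matrix_matrix_mult_def sum.distrib algebra_simps)

lemma matrix_neg_left: "(- A) ** C = - (A ** (C :: 'a::ring_1^_^_))"
  by (simp add: vec_eq_iff matrix_matrix_mult_def sum_negf)

lemma matrix_neg_right: "C ** (- A) = - (C ** (A :: 'a::ring_1^_^_))"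
  by (simp add: vec_eq_iff matrix_matrix_mult_def sum_negf)

lemma matrix_scaleR_left: "(c *\<^sub>R A) ** C = c *\<^sub>R (A ** (C :: complex^_^_))"
  by (simp add: vec_eq_iff matrix_matrix_mult_def scaleR_sum_right)

lemma matrix_scaleR_right: "C ** (c *\<^sub>R A) = c *\<^sub>R (C ** (A :: complex^_^_))"
  by (simp add: vec_eq_iff matrix_matrix_mult_def scaleR_sum_right)

lemma linear_matrix_mult_left: "linear (\<lambda>Z. (T::complex^'n^'m) ** (Z::complex^'p^'n))"
  by (rule linearI) (simp_all add: matrix_add_ldistrib matrix_scaleR_right)

lemma linear_matrix_mult_right: "linear (\<lambda>Z. (Z::complex^'n^'m) ** (T::complex^'p^'n))"
  by (rule linearI) (simp_all add: matrix_add_rdistrib matrix_scaleR_left)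


section \<open>The conjugate transpose\<close>

lemma cmat_adj_nth [simp]: "cmat_adj A $ i $ j = cnj (A $ j $ i)"
  by (simp add: cmat_adj_def)

lemma cmat_adj_adj [simp]: "cmat_adj (cmat_adj A) = A"
  by (simp add: vec_eq_iff)

lemma cmat_adj_mult: "cmat_adj (A ** B) = cmat_adj B ** cmat_adj A"
  by (simp add: vec_eq_iff matrix_matrix_mult_def mult.commute)

lemma cmat_adj_add: "cmat_adj (A + B) = cmat_adj A + cmat_adj B"
  by (simp add: vec_eq_iff)

lemma cmat_adj_diff: "cmat_adj (A - B) = cmat_adj A - cmat_adj B"
  by (simp add: vec_eq_iff)

lemma cmat_adj_zero [simp]: "cmat_adj 0 = 0"
  by (simp add: vec_eq_iff)

lemma cmat_adj_mat_1 [simp]: "cmat_adj (mat 1) = mat 1"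
  by (simp add: vec_eq_iff mat_def)

lemma linear_cmat_adj: "linear cmat_adj"
  by (rule linearI) (simp_all add: cmat_adj_add vec_eq_iff complex_cnj_scaleR)

lemma subspace_hermitian: "subspace {Z. cmat_adj Z = Z}"
proof -
  have "linear (\<lambda>Z. cmat_adj Z - Z)"
    using linear_cmat_adj by (intro linear_compose_sub linear_ident)
  then show ?thesis
    using linear_subspace_kernel by fastforce
qed

lemma norm_cmat_adj: "norm (cmat_adj A) = norm A"
proof -
  have "(norm (cmat_adj A))\<^sup>2 = (norm A)\<^sup>2"
    by (simp only: norm_matrix_sq) (subst sum.swap, simp)
  then show ?thesis by (rule power2_eq_imp_eq) simp_all
qed

lemma inner_complex_eq_Re_mult_cnj: "inner x y = Re (x * cnj y)"
  by (simp add: inner_complex_def)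

lemma inner_matrix_mult_adj: "inner (M ** X) Y = inner X (cmat_adj M ** Y)"
proof -
  have "inner (M ** X) Y = (\<Sum>i\<in>UNIV. \<Sum>j\<in>UNIV. \<Sum>k\<in>UNIV. Re (M$i$k * X$k$j * cnj (Y$i$j)))"
    by (simp add: inner_vec_def matrix_matrix_mult_def inner_complex_eq_Re_mult_cnj sum_distrib_right Re_sum)
  also have "\<dots> = (\<Sum>i\<in>UNIV. \<Sum>k\<in>UNIV. \<Sum>j\<in>UNIV. Re (M$i$k * X$k$j * cnj (Y$i$j)))"
    by (rule sum.cong[OF refl], rule sum.swap)
  also have "\<dots> = (\<Sum>k\<in>UNIV. \<Sum>i\<in>UNIV. \<Sum>j\<in>UNIV. Re (M$i$k * X$k$j * cnj (Y$i$j)))"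
    by (rule sum.swap)
  also have "\<dots> = (\<Sum>k\<in>UNIV. \<Sum>j\<in>UNIV. \<Sum>i\<in>UNIV. Re (M$i$k * X$k$j * cnj (Y$i$j)))"
    by (rule sum.cong[OF refl], rule sum.swap)
  also have "\<dots> = inner X (cmat_adj M ** Y)"
    by (simp add: inner_vec_def matrix_matrix_mult_def inner_complex_eq_Re_mult_cnj sum_distrib_left Re_sum mult_ac)
  finally show ?thesis .
qed

lemma inner_matrix_vector_mult_adj: "inner (M *v y) x = inner y (cmat_adj M *v x)"
proof -
  have "inner (M *v y) x = (\<Sum>i\<in>UNIV. \<Sum>k\<in>UNIV. Re (M$i$k * y$k * cnj (x$i)))"
    by (simp add: inner_vec_def matrix_vector_mult_def inner_complex_eq_Re_mult_cnj sum_distrib_right Re_sum)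
  also have "\<dots> = (\<Sum>k\<in>UNIV. \<Sum>i\<in>UNIV. Re (M$i$k * y$k * cnj (x$i)))"
    by (rule sum.swap)
  also have "\<dots> = inner y (cmat_adj M *v x)"
    by (simp add: inner_vec_def matrix_vector_mult_def inner_complex_eq_Re_mult_cnj sum_distrib_left Re_sum mult_ac)
  finally show ?thesis .
qed

lemma matrix_mult_adj_self_eq_0:
  assumes "M ** cmat_adj M = 0"
  shows "M = 0"
proof -
  have "inner (M ** cmat_adj M) (mat 1) = inner (cmat_adj M) (cmat_adj M)"
    by (simp add: inner_matrix_mult_adj)
  then have "cmat_adj M = 0"
    using assms by simp
  then show ?thesis
    by (metis cmat_adj_adj cmat_adj_zero)
qed


section \<open>Orthogonal projectors\<close>

definition orth_projector :: "complex^'n^'n \<Rightarrow> bool" where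
  "orth_projector P \<longleftrightarrow> cmat_adj P = P \<and> P ** P = P"

lemma norm_sq_split_projector_left:
  fixes Z :: "complex^'n^'m"
  assumes "orth_projector P"
  shows "(norm Z)\<^sup>2 = (norm (P ** Z))\<^sup>2 + (norm ((mat 1 - P) ** Z))\<^sup>2"
proof -
  have "inner (P ** Z) ((mat 1 - P) ** Z) = inner Z (P ** ((mat 1 - P) ** Z))"
    using assms by (simp add: inner_matrix_mult_adj orth_projector_def)
  also have "\<dots> = 0"
    using assms by (simp add: orth_projector_def matrix_mul_assoc matrix_diff_ldistrib)
  finally have "orthogonal (P ** Z) ((mat 1 - P) ** Z)"
    by (simp add: orthogonal_def)
  then have "(norm (P ** Z + (mat 1 - P) ** Z))\<^sup>2 = (norm (P ** Z))\<^sup>2 + (norm ((mat 1 - P) ** Z))\<^sup>2"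
    by (rule norm_add_Pythagorean)
  then show ?thesis by (simp add: matrix_diff_rdistrib)
qed

lemma norm_sq_split_projector_right:
  fixes Z :: "complex^'m^'n"
  assumes "orth_projector P"
  shows "(norm Z)\<^sup>2 = (norm (Z ** P))\<^sup>2 + (norm (Z ** (mat 1 - P)))\<^sup>2"
proof -
  have "P ** cmat_adj Z = cmat_adj (Z ** P)" "(mat 1 - P) ** cmat_adj Z = cmat_adj (Z ** (mat 1 - P))"
    using assms by (simp_all add: orth_projector_def cmat_adj_mult cmat_adj_diff)
  then show ?thesis
    using norm_sq_split_projector_left[OF assms, of "cmat_adj Z"] by (simp add: norm_cmat_adj)
qed


section \<open>Existence of the Moore--Penrose inverse\<close>

primrec mpow :: "complex^'n^'n \<Rightarrow> nat \<Rightarrow> complex^'n^'n" where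
  "mpow T 0 = mat 1"
| "mpow T (Suc k) = mpow T k ** T"

lemma mpow_commute: "T ** mpow T k = mpow T k ** T"
  by (induction k) (simp_all add: matrix_mul_assoc)

lemma cmat_adj_mpow: "cmat_adj T = T \<Longrightarrow> cmat_adj (mpow T k) = mpow T k"
  by (induction k) (simp_all add: cmat_adj_mult mpow_commute)

lemma hermitian_eq_0_if_annihilated:
  assumes "cmat_adj Z = Z" and "Z = Q ** T" and "T ** Z = 0"
  shows "Z = 0"
proof -
  have "Z ** cmat_adj Z = Q ** T ** Z"
    using assms(1) assms(2)[symmetric] by simp
  also have "\<dots> = Q ** (T ** Z)"
    by (rule matrix_mul_assoc[symmetric])
  finally have "Z ** cmat_adj Z = 0"
    using assms(3) by simp
  then show ?thesis
    by (rule matrix_mult_adj_self_eq_0)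
qed

text \<open>Left multiplication by T is injective on the span of the powers T^k, k \<ge> 1, and maps it
  onto the span of the powers T^k, k \<ge> 2; comparing dimensions, both spans coincide.\<close>

lemma hermitian_mem_span_higher_mpow:
  fixes T :: "complex^'n^'n"
  assumes T: "cmat_adj T = T"
  shows "T \<in> span (range (\<lambda>k. mpow T (Suc (Suc k))))"
proof -
  define S1 where "S1 = range (\<lambda>k. mpow T (Suc k))"
  define S2 where "S2 = range (\<lambda>k. mpow T (Suc (Suc k)))"
  have "S1 \<subseteq> {Z. cmat_adj Z = Z} \<inter> range (\<lambda>Q. Q ** T)"
    using cmat_adj_mpow[OF T] by (auto simp: S1_def cmat_adj_mult T mpow_commute)
  moreover have "subspace ({Z. cmat_adj Z = Z} \<inter> range (\<lambda>Q. Q ** T))"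
    using subspace_hermitian linear_subspace_image[OF linear_matrix_mult_right subspace_UNIV]
    by (rule subspace_inter)
  ultimately have span_S1: "span S1 \<subseteq> {Z. cmat_adj Z = Z} \<inter> range (\<lambda>Q. Q ** T)"
    by (rule span_minimal)
  have inj: "inj_on (\<lambda>Z. T ** Z) (span S1)"
    unfolding linear_inj_on_iff_eq_0[OF linear_matrix_mult_left subspace_span]
    using span_S1 hermitian_eq_0_if_annihilated by blast
  have "(\<lambda>Z. T ** Z) ` S1 = S2"
    by (simp add: S1_def S2_def image_image matrix_mul_assoc mpow_commute)
  then have "dim S2 = dim S1"
    using eucl.dim_image_eq[OF linear_matrix_mult_left inj] by simp
  moreover have "mpow T (Suc (Suc k)) \<in> S1" for k
    unfolding S1_def by (rule range_eqI[of _ _ "Suc k"]) simp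
  then have "S2 \<subseteq> S1"
    unfolding S2_def by blast
  ultimately have "span S2 = span S1"
    by (intro eucl.dim_eq_span) auto
  moreover have "T \<in> span S1"
    by (rule span_base) (auto simp: S1_def intro!: range_eqI[of _ _ 0])
  ultimately show ?thesis by (simp add: S2_def)
qed

text \<open>The span is taken over the reals, so B is a real polynomial in T, hence Hermitian and
  commuting with T.\<close>

lemma hermitian_exists_square_inverse:
  fixes T :: "complex^'n^'n"
  assumes T: "cmat_adj T = T"
  obtains B where "cmat_adj B = B" and "B ** T = T ** B" and "B ** T ** T = T"
proof -
  define C where "C = {B. cmat_adj B = B} \<inter> {B. B ** T - T ** B = 0}"
  have "subspace C"
    unfolding C_def
    by (intro subspace_inter subspace_hermitian linear_subspace_kernel linear_compose_sub
        linear_matrix_mult_left linear_matrix_mult_right)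
  moreover have "linear (\<lambda>B. B ** T ** T)"
    using linear_matrix_mult_right[of "T ** T"] by (simp add: matrix_mul_assoc)
  ultimately have "subspace ((\<lambda>B. B ** T ** T) ` C)"
    by (rule linear_subspace_image[rotated])
  moreover have "mpow T k \<in> C" for k
    using cmat_adj_mpow[OF T] mpow_commute[of T k] by (simp add: C_def)
  then have "mpow T (Suc (Suc k)) \<in> (\<lambda>B. B ** T ** T) ` C" for k
    by (rule rev_image_eqI) simp
  ultimately have "span (range (\<lambda>k. mpow T (Suc (Suc k)))) \<subseteq> (\<lambda>B. B ** T ** T) ` C"
    by (intro span_minimal) auto
  then obtain B where "B \<in> C" and "T = B ** T ** T"
    using hermitian_mem_span_higher_mpow[OF T] by blast
  moreover from \<open>B \<in> C\<close> have "cmat_adj B = B" and "B ** T = T ** B"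
    by (simp_all add: C_def)
  ultimately show ?thesis
    using that by metis
qed

lemma penrose_exists: "\<exists>X. penrose (A::complex^'n^'m) X"
proof -
  define T where "T = cmat_adj A ** A"
  have "cmat_adj T = T" by (simp add: T_def cmat_adj_mult)
  then obtain B where B: "cmat_adj B = B" and BT: "B ** T = T ** B" and BTT: "B ** T ** T = T"
    by (rule hermitian_exists_square_inverse)
  have "(B ** T - mat 1) ** cmat_adj A ** cmat_adj ((B ** T - mat 1) ** cmat_adj A)
          = (B ** T - mat 1) ** T ** cmat_adj (B ** T - mat 1)"
    by (simp add: cmat_adj_mult T_def matrix_mul_assoc)
  also have "(B ** T - mat 1) ** T = 0"
    using BTT by (simp add: matrix_diff_rdistrib)
  finally have "(B ** T - mat 1) ** cmat_adj A ** cmat_adj ((B ** T - mat 1) ** cmat_adj A) = 0"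
    by simp
  then have "(B ** T - mat 1) ** cmat_adj A = 0"
    by (rule matrix_mult_adj_self_eq_0)
  then have BTA: "B ** T ** cmat_adj A = cmat_adj A"
    by (simp add: matrix_diff_rdistrib)
  then have "cmat_adj (B ** T ** cmat_adj A) = A"
    by (metis cmat_adj_adj)
  then have ATB: "A ** T ** B = A"
    by (simp add: cmat_adj_mult B \<open>cmat_adj T = T\<close> matrix_mul_assoc)
  define X where "X = B ** cmat_adj A"
  have XA: "X ** A = B ** T" by (simp add: X_def T_def matrix_mul_assoc)
  have "penrose A X"
    unfolding penrose_def
  proof (intro conjI)
    show "A ** X ** A = A" using ATB BT by (simp add: XA flip: matrix_mul_assoc)
    show "X ** A ** X = X" using BTA BT by (simp add: XA) (metis X_def matrix_mul_assoc)
    show "cmat_adj (A ** X) = A ** X" by (simp add: X_def cmat_adj_mult B matrix_mul_assoc)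
    show "cmat_adj (X ** A) = X ** A" by (simp add: XA cmat_adj_mult B \<open>cmat_adj T = T\<close> BT)
  qed
  then show ?thesis by blast
qed

lemma penrose_unique:
  assumes X: "penrose A X" and Y: "penrose A Y"
  shows "X = Y"
proof -
  from X have x1: "A ** X ** A = A" and x2: "X ** A ** X = X"
    and x3: "cmat_adj (A ** X) = A ** X" and x4: "cmat_adj (X ** A) = X ** A"
    by (auto simp: penrose_def)
  from Y have y1: "A ** Y ** A = A" and y2: "Y ** A ** Y = Y"
    and y3: "cmat_adj (A ** Y) = A ** Y" and y4: "cmat_adj (Y ** A) = Y ** A"
    by (auto simp: penrose_def)
  have "X = X ** cmat_adj (A ** X)" using x2 x3 by (simp add: matrix_mul_assoc)
  also have "\<dots> = X ** cmat_adj X ** cmat_adj (A ** Y ** A)"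
    using y1 by (simp add: cmat_adj_mult matrix_mul_assoc)
  also have "\<dots> = X ** cmat_adj (A ** X) ** cmat_adj (A ** Y)"
    by (simp add: cmat_adj_mult matrix_mul_assoc)
  also have "\<dots> = X ** A ** Y" using x3 y3 x2 by (simp add: matrix_mul_assoc)
  finally have XAY: "X = X ** A ** Y" .
  have "Y = cmat_adj (Y ** A) ** Y" using y2 y4 by (simp add: matrix_mul_assoc)
  also have "\<dots> = cmat_adj (A ** X ** A) ** cmat_adj Y ** Y"
    using x1 by (simp add: cmat_adj_mult matrix_mul_assoc)
  also have "\<dots> = cmat_adj (X ** A) ** cmat_adj (Y ** A) ** Y"
    by (simp add: cmat_adj_mult matrix_mul_assoc)
  also have "\<dots> = X ** A ** Y" using x4 y4 y2 by (metis matrix_mul_assoc)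
  finally show ?thesis using XAY by simp
qed

lemma penrose_mp_inv: "penrose A (mp_inv A)"
  unfolding mp_inv_def using penrose_exists[of A] penrose_unique[of A] by (metis theI)

lemma mult_mp_inv_mult [simp]:
  "A ** mp_inv A ** A = A" "Z ** A ** mp_inv A ** A = Z ** A"
  using penrose_mp_inv[of A] by (simp_all add: penrose_def flip: matrix_mul_assoc)

lemma mp_inv_mult_mp_inv [simp]:
  "mp_inv A ** A ** mp_inv A = mp_inv A" "Z ** mp_inv A ** A ** mp_inv A = Z ** mp_inv A"
  using penrose_mp_inv[of A] by (simp_all add: penrose_def flip: matrix_mul_assoc)

lemma cmat_adj_mult_mp_inv: "cmat_adj (A ** mp_inv A) = A ** mp_inv A"
  using penrose_mp_inv[of A] by (simp add: penrose_def)

lemma cmat_adj_mp_inv_mult: "cmat_adj (mp_inv A ** A) = mp_inv A ** A"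
  using penrose_mp_inv[of A] by (simp add: penrose_def)

lemma orth_projector_mult_mp_inv: "orth_projector (A ** mp_inv A)"
  by (simp add: orth_projector_def cmat_adj_mult_mp_inv matrix_mul_assoc)

lemma orth_projector_mp_inv_mult: "orth_projector (mp_inv A ** A)"
  by (simp add: orth_projector_def cmat_adj_mp_inv_mult matrix_mul_assoc)


section \<open>Spectral norm bounds\<close>

lemma spec_norm_nonneg: "0 \<le> spec_norm (A::complex^'n^'m)"
  unfolding spec_norm_def by (rule onorm_pos_le) simp

lemma norm_matrix_vector_mult_le: "norm ((A::complex^'n^'m) *v x) \<le> spec_norm A * norm x"
  unfolding spec_norm_def by (rule onorm) simp

lemma norm_adj_matrix_vector_mult_le:
  "norm (cmat_adj (A::complex^'n^'m) *v x) \<le> spec_norm A * norm x"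
proof -
  define y where "y = cmat_adj A *v x"
  have "(norm y)\<^sup>2 = inner x (A *v y)"
    using inner_matrix_vector_mult_adj[of "cmat_adj A" x y]
    by (simp add: power2_norm_eq_inner y_def inner_commute)
  also have "\<dots> \<le> norm x * (spec_norm A * norm y)"
    by (intro order.trans[OF norm_cauchy_schwarz] mult_left_mono norm_matrix_vector_mult_le) simp
  finally have "norm y * norm y \<le> (spec_norm A * norm x) * norm y"
    by (simp add: power2_eq_square mult_ac)
  then show ?thesis
    using spec_norm_nonneg[of A] by (cases "norm y = 0") (simp_all add: y_def[symmetric])
qed

lemma norm_matrix_mult_le:
  fixes M :: "complex^'n^'m" and Z :: "complex^'p^'n"
  assumes bound: "\<And>x. norm (M *v x) \<le> c * norm x" and "0 \<le> c"
  shows "norm (M ** Z) \<le> c * norm Z"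
proof -
  have "(norm (M ** Z))\<^sup>2 = (\<Sum>j\<in>UNIV. (norm (M *v column j Z))\<^sup>2)"
    by (simp only: norm_matrix_sq_columns column_matrix_mult)
  also have "\<dots> \<le> (\<Sum>j\<in>UNIV. (c * norm (column j Z))\<^sup>2)"
    by (intro sum_mono power_mono bound) simp
  also have "\<dots> = (c * norm Z)\<^sup>2"
    by (simp only: norm_matrix_sq_columns power_mult_distrib sum_distrib_left)
  finally show ?thesis by (rule power2_le_imp_le) (simp add: \<open>0 \<le> c\<close>)
qed

lemma norm_matrix_mult_le_spec_norm: "norm (A ** Z) \<le> spec_norm A * norm Z"
  by (rule norm_matrix_mult_le[OF norm_matrix_vector_mult_le spec_norm_nonneg])

lemma norm_adj_matrix_mult_le_spec_norm: "norm (cmat_adj A ** Z) \<le> spec_norm A * norm Z"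
  by (rule norm_matrix_mult_le[OF norm_adj_matrix_vector_mult_le spec_norm_nonneg])


section \<open>Perturbation of the Moore--Penrose inverse\<close>

lemma norm_mp_inv_diff_sq:
  fixes A B :: "complex^'n^'m"
  defines "Q \<equiv> A ** mp_inv A" and "P \<equiv> mp_inv B ** B"
  shows "(norm (mp_inv B - mp_inv A))\<^sup>2 = (norm (mp_inv B ** (B - A) ** mp_inv A))\<^sup>2
           + (norm (mp_inv B ** (mat 1 - Q)))\<^sup>2 + (norm ((mat 1 - P) ** mp_inv A))\<^sup>2"
proof -
  define D where "D = mp_inv B - mp_inv A"
  note simps = P_def Q_def D_def matrix_mul_assoc matrix_diff_rdistrib matrix_diff_ldistrib
  have "(norm D)\<^sup>2 = (norm (P ** D ** Q))\<^sup>2 + (norm (P ** D ** (mat 1 - Q)))\<^sup>2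
      + (norm ((mat 1 - P) ** D ** Q))\<^sup>2 + (norm ((mat 1 - P) ** D ** (mat 1 - Q)))\<^sup>2"
    using norm_sq_split_projector_left[OF orth_projector_mp_inv_mult, of D B]
      norm_sq_split_projector_right[OF orth_projector_mult_mp_inv, of "P ** D" A]
      norm_sq_split_projector_right[OF orth_projector_mult_mp_inv, of "(mat 1 - P) ** D" A]
    unfolding P_def Q_def by linarith
  moreover have "P ** D ** Q = - (mp_inv B ** (B - A) ** mp_inv A)" by (simp add: simps)
  moreover have "P ** D ** (mat 1 - Q) = mp_inv B ** (mat 1 - Q)" by (simp add: simps)
  moreover have "(mat 1 - P) ** D ** Q = - ((mat 1 - P) ** mp_inv A)" by (simp add: simps)
  moreover have "(mat 1 - P) ** D ** (mat 1 - Q) = 0" by (simp add: simps)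
  ultimately show ?thesis by (simp add: D_def)
qed

lemma norm_mp_inv_mult_diff_le:
  fixes A B :: "complex^'n^'m"
  defines "P \<equiv> mp_inv B ** B"
  shows "norm (mp_inv A ** (B - A) ** (mat 1 - P)) \<le> spec_norm A * norm ((mat 1 - P) ** mp_inv A)"
proof -
  have "mp_inv A ** (B - A) ** (mat 1 - P) = - (cmat_adj A ** cmat_adj ((mat 1 - P) ** mp_inv A))"
    using cmat_adj_mp_inv_mult[of A] cmat_adj_mp_inv_mult[of B]
    by (simp add: P_def cmat_adj_mult cmat_adj_diff matrix_mul_assoc matrix_diff_rdistrib
        matrix_diff_ldistrib)
  then show ?thesis
    using norm_adj_matrix_mult_le_spec_norm[of A "cmat_adj ((mat 1 - P) ** mp_inv A)"]
    by (simp add: norm_cmat_adj)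
qed

lemma norm_diff_mult_mp_inv_le:
  fixes A B :: "complex^'n^'m"
  defines "Q \<equiv> A ** mp_inv A"
  shows "norm ((mat 1 - Q) ** (B - A) ** mp_inv B) \<le> spec_norm B * norm (mp_inv B ** (mat 1 - Q))"
proof -
  have "(mat 1 - Q) ** (B - A) ** mp_inv B = cmat_adj (B ** (mp_inv B ** (mat 1 - Q)))"
    using cmat_adj_mult_mp_inv[of A] cmat_adj_mult_mp_inv[of B]
    by (simp add: Q_def cmat_adj_mult cmat_adj_diff matrix_mul_assoc matrix_diff_rdistrib
        matrix_diff_ldistrib)
  then show ?thesis
    using norm_matrix_mult_le_spec_norm by (simp add: norm_cmat_adj)
qed

lemma divide_sq_le_sq: "a \<le> (c * w)\<^sup>2 \<Longrightarrow> a / c\<^sup>2 \<le> (w::real)\<^sup>2"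
  by (cases "c = 0") (simp_all add: pos_divide_le_eq power_mult_distrib mult.commute)

lemma mp_inv_diff_lower_bound:
  fixes A B :: "complex^'n^'m"
  defines "E \<equiv> B - A"
  shows "((norm (mp_inv A ** E))\<^sup>2 - (norm (mp_inv A ** E ** mp_inv B ** B))\<^sup>2) / (spec_norm A)\<^sup>2
       + ((norm (E ** mp_inv B))\<^sup>2 - (norm (A ** mp_inv A ** E ** mp_inv B))\<^sup>2) / (spec_norm B)\<^sup>2
       + (norm (mp_inv B ** E ** mp_inv A))\<^sup>2 \<le> (norm (mp_inv B - mp_inv A))\<^sup>2"
proof -
  have "(norm (mp_inv A ** E))\<^sup>2 - (norm (mp_inv A ** E ** mp_inv B ** B))\<^sup>2
      = (norm (mp_inv A ** E ** (mat 1 - mp_inv B ** B)))\<^sup>2"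
    using norm_sq_split_projector_right[OF orth_projector_mp_inv_mult, of "mp_inv A ** E" B]
    by (simp add: matrix_mul_assoc)
  also have "\<dots> \<le> (spec_norm A * norm ((mat 1 - mp_inv B ** B) ** mp_inv A))\<^sup>2"
    unfolding E_def by (intro power_mono norm_mp_inv_mult_diff_le) simp
  finally have left: "((norm (mp_inv A ** E))\<^sup>2 - (norm (mp_inv A ** E ** mp_inv B ** B))\<^sup>2)
      / (spec_norm A)\<^sup>2 \<le> (norm ((mat 1 - mp_inv B ** B) ** mp_inv A))\<^sup>2"
    by (rule divide_sq_le_sq)
  have "(norm (E ** mp_inv B))\<^sup>2 - (norm (A ** mp_inv A ** E ** mp_inv B))\<^sup>2
      = (norm ((mat 1 - A ** mp_inv A) ** E ** mp_inv B))\<^sup>2"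
    using norm_sq_split_projector_left[OF orth_projector_mult_mp_inv, of "E ** mp_inv B" A]
    by (simp add: matrix_mul_assoc)
  also have "\<dots> \<le> (spec_norm B * norm (mp_inv B ** (mat 1 - A ** mp_inv A)))\<^sup>2"
    unfolding E_def by (intro power_mono norm_diff_mult_mp_inv_le) simp
  finally have right: "((norm (E ** mp_inv B))\<^sup>2 - (norm (A ** mp_inv A ** E ** mp_inv B))\<^sup>2)
      / (spec_norm B)\<^sup>2 \<le> (norm (mp_inv B ** (mat 1 - A ** mp_inv A)))\<^sup>2"
    by (rule divide_sq_le_sq)
  show ?thesis
    using norm_mp_inv_diff_sq[where A = A and B = B] left right unfolding E_def by linarith
qed

theorem theorem3p6:
  fixes A B :: "complex ^'n ^'m"
  defines "E \<equiv> B - A"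
  defines "\<alpha>1 \<equiv> ((frob_norm (mp_inv A ** E))\<^sup>2 - (frob_norm (mp_inv A ** E ** mp_inv B ** B))\<^sup>2)
                     / (spec_norm A)\<^sup>2
              + ((frob_norm (E ** mp_inv B))\<^sup>2 - (frob_norm (A ** mp_inv A ** E ** mp_inv B))\<^sup>2)
                     / (spec_norm B)\<^sup>2"
  defines "\<alpha>2 \<equiv> ((frob_norm (E ** mp_inv A))\<^sup>2 - (frob_norm (B ** mp_inv B ** E ** mp_inv A))\<^sup>2)
                     / (spec_norm A)\<^sup>2
              + ((frob_norm (mp_inv B ** E))\<^sup>2 - (frob_norm (mp_inv B ** E ** mp_inv A ** A))\<^sup>2)
                     / (spec_norm B)\<^sup>2"
  shows "(frob_norm (mp_inv B - mp_inv A))\<^sup>2 \<ge>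
           max (\<alpha>1 + (frob_norm (mp_inv B ** E ** mp_inv A))\<^sup>2)
               (\<alpha>2 + (frob_norm (mp_inv A ** E ** mp_inv B))\<^sup>2)"
proof (rule max.boundedI)
  show "\<alpha>1 + (frob_norm (mp_inv B ** E ** mp_inv A))\<^sup>2 \<le> (frob_norm (mp_inv B - mp_inv A))\<^sup>2"
    using mp_inv_diff_lower_bound[of A B] unfolding \<alpha>1_def E_def frob_norm_eq_norm by simp
  have "A - B = - E" by (simp add: E_def)
  then show "\<alpha>2 + (frob_norm (mp_inv A ** E ** mp_inv B))\<^sup>2 \<le> (frob_norm (mp_inv B - mp_inv A))\<^sup>2"
    using mp_inv_diff_lower_bound[of B A] norm_minus_commute[of "mp_inv A" "mp_inv B"]
    unfolding \<alpha>2_def frob_norm_eq_norm by (simp add: matrix_neg_left matrix_neg_right)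
qed

end
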